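(* Let $f_1,f_2:\mathbb R^d\to\mathbb R$ be convex with $\nabla f_i$ globally Lipschitz continuous with modulus $L_i>0$ ($i=1,2$), let $f_3:\mathbb R^d\to\mathbb R\cup\{+\infty\}$ be proper and lower semicontinuous, and assume $\varphi:=f_1+f_2+f_3$ has a nonempty set of minimizers. Let $\gamma\in(0,\frac{1}{L_1+L_2})$ and $\lambda,\alpha>0$, and let $(x_1^k,x_2^k,x_3^k)_k$, $(z_1^k,z_2^k)_k$ be generated by the relaxed Ryu splitting method. Set $\xi^k=\big(x_1^k,x_2^k,x_3^k,\gamma^{-1}(x_1^k-z_1^k),\gamma^{-1}(\alpha(x_2^k-x_1^k)-z_2^k)\big)$. Then for all $k\ge1$, $\varphi_\gamma^{\mathrm{Ryu}}(z_1^k,z_2^k)=\mathcal L_{1/\gamma_1,1/\gamma_2}(\xi^k)$, where $\gamma_1=\gamma/\alpha$, $\gamma_2=\gamma/(1-\alpha)$.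
   Context: For $h:\mathbb R^d\to\mathbb R\cup\{+\infty\}$ and $\gamma>0$, $\mathrm{prox}_{\gamma h}(z):=\operatorname{argmin}_{y}\{h(y)+\frac{1}{2\gamma}\|y-z\|^2\}$. Conventions $\frac{c}{0}=\infty$, $\frac{d}{\infty}=0$ ($c>0,d\in\mathbb R$). The relaxed Ryu splitting method: given $z_1^0,z_2^0\in\mathbb R^d$, for $k\ge0$, $x_1^k=\mathrm{prox}_{\gamma f_1}(z_1^k)$, $x_2^k=\mathrm{prox}_{\frac{\gamma}{\alpha}f_2}(\frac{z_2^k}{\alpha}+x_1^k)$, $x_3^k\in\mathrm{prox}_{\gamma f_3}(x_1^k-z_1^k+x_2^k-z_2^k)$, $z_1^{k+1}=z_1^k+\lambda(x_3^k-x_1^k)$, $z_2^{k+1}=z_2^k+\lambda(x_3^k-x_2^k)$. Relaxed Ryu envelope: for $(z_1,z_2)$, $x_1=\mathrm{prox}_{\gamma f_1}(z_1)$, $x_2=\mathrm{prox}_{\frac{\gamma}{\alpha}f_2}(\frac{z_2}{\alpha}+x_1)$, $\varphi_\gamma^{\mathrm{Ryu}}(z_1,z_2):=\min_{y}\{f_3(y)+\sum_{i=1}^2[f_i(x_i)+\langle y-x_i,\nabla f_i(x_i)\rangle+\frac{1}{2\gamma_i}\|y-x_i\|^2]\}$. Augmented Lagrangian: $\mathcal L_{\beta_1,\beta_2}(x_1,x_2,x_3,\mu_1,\mu_2)=f_3(x_3)+\sum_{i=1}^2\big(f_i(x_i)+\langle\mu_i,x_i-x_3\rangle+\frac{\beta_i}{2}\|x_i-x_3\|^2\big)$.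 *)

theory Defs
  imports "HOL-Analysis.Analysis"
begin

text \<open>Extended-real-valued functions model functions into R \<union> {+\<infinity>}.\<close>

definition proper_fun :: "('a \<Rightarrow> ereal) \<Rightarrow> bool" where
  "proper_fun f \<longleftrightarrow> (\<exists>x. f x \<noteq> \<infinity>) \<and> (\<forall>x. f x \<noteq> -\<infinity>)"

definition lsc_fun :: "('a::topological_space \<Rightarrow> ereal) \<Rightarrow> bool" where
  "lsc_fun f \<longleftrightarrow> (\<forall>x c. c < f x \<longrightarrow> (\<forall>\<^sub>F y in at x. c < f y))"

definition prox_set :: "real \<Rightarrow> ('a::real_inner \<Rightarrow> ereal) \<Rightarrow> 'a \<Rightarrow> 'a set" where
  "prox_set \<gamma> h z = {y. \<forall>u. h y + ereal (norm (y - z)^2 / (2*\<gamma>))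
                              \<le> h u + ereal (norm (u - z)^2 / (2*\<gamma>))}"

text \<open>Single-valued prox (used for the real-valued convex smooth functions, where it is unique).\<close>
definition prox :: "real \<Rightarrow> ('a::real_inner \<Rightarrow> real) \<Rightarrow> 'a \<Rightarrow> 'a" where
  "prox \<gamma> h z = (THE y. y \<in> prox_set \<gamma> (\<lambda>x. ereal (h x)) z)"

text \<open>Relaxed Ryu envelope; g1, g2 are the gradients of f1, f2.
  The coefficients 1/(2 gamma_i) are written as alpha/(2 gamma) and (1-alpha)/(2 gamma),
  i.e. with gamma_1 = gamma/alpha, gamma_2 = gamma/(1-alpha) and the conventions c/0 = \<infinity>, d/\<infinity> = 0.\<close>
definition ryu_env ::
  "real \<Rightarrow> real \<Rightarrow> ('a::real_inner \<Rightarrow> real) \<Rightarrow> ('a \<Rightarrow> real) \<Rightarrow> ('a \<Rightarrow> ereal)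
   \<Rightarrow> ('a \<Rightarrow> 'a) \<Rightarrow> ('a \<Rightarrow> 'a) \<Rightarrow> 'a \<Rightarrow> 'a \<Rightarrow> ereal" where
  "ryu_env \<gamma> \<alpha> f1 f2 f3 g1 g2 z1 z2 =
    (let x1 = prox \<gamma> f1 z1;
         x2 = prox (\<gamma>/\<alpha>) f2 (z2 /\<^sub>R \<alpha> + x1)
     in (INF y. f3 y
          + ereal (f1 x1 + inner (y - x1) (g1 x1) + (\<alpha>/(2*\<gamma>)) * norm (y - x1)^2)
          + ereal (f2 x2 + inner (y - x2) (g2 x2) + ((1-\<alpha>)/(2*\<gamma>)) * norm (y - x2)^2)))"

definition aug_lagr ::
  "real \<Rightarrow> real \<Rightarrow> ('a::real_inner \<Rightarrow> real) \<Rightarrow> ('a \<Rightarrow> real) \<Rightarrow> ('a \<Rightarrow> ereal)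
   \<Rightarrow> 'a \<Rightarrow> 'a \<Rightarrow> 'a \<Rightarrow> 'a \<Rightarrow> 'a \<Rightarrow> ereal" where
  "aug_lagr \<beta>1 \<beta>2 f1 f2 f3 x1 x2 x3 \<mu>1 \<mu>2 =
     f3 x3
     + ereal (f1 x1 + inner \<mu>1 (x1 - x3) + (\<beta>1/2) * norm (x1 - x3)^2)
     + ereal (f2 x2 + inner \<mu>2 (x2 - x3) + (\<beta>2/2) * norm (x2 - x3)^2)"

end

theory Submission
  imports Defs
begin

text \<open>The optimality conditions of the two smooth prox steps say that the dual components of
  \<open>\<xi>\<^sup>k\<close> are the negative gradients \<open>-\<nabla>f\<^sub>i(x\<^sub>i\<^sup>k)\<close>. Substituting them, the objective
  minimised in the envelope becomes \<open>y \<mapsto> L(x\<^sub>1\<^sup>k, x\<^sub>2\<^sup>k, y, \<mu>\<^sub>1\<^sup>k, \<mu>\<^sub>2\<^sup>k)\<close>. In \<open>y\<close> this is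
  \<open>f\<^sub>3\<close> plus a quadratic of curvature \<open>1/\<gamma>\<close> centred at \<open>x\<^sub>1\<^sup>k - z\<^sub>1\<^sup>k + x\<^sub>2\<^sup>k - z\<^sub>2\<^sup>k\<close>, so
  it is minimised by the prox step \<open>x\<^sub>3\<^sup>k\<close>, where it takes the value \<open>L(\<xi>\<^sup>k)\<close>.\<close>

lemma convex_on_gradient_inequality:
  fixes f :: "'a::real_inner \<Rightarrow> real"
  assumes cvx: "convex_on UNIV f"
    and der: "(f has_derivative (\<lambda>h. inner g h)) (at x)"
  shows "f x + inner g (y - x) \<le> f y"
proof -
  define \<phi> where "\<phi> s = f (x + s *\<^sub>R (y - x))" for s :: real
  have "convex_on UNIV \<phi>"
    unfolding convex_on_def \<phi>_def
  proof (intro conjI allI impI ballI)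
    fix a b u v :: real
    assume uv: "0 \<le> u" "0 \<le> v" "u + v = 1"
    have "x + (u * a + v * b) *\<^sub>R (y - x) = u *\<^sub>R (x + a *\<^sub>R (y - x)) + v *\<^sub>R (x + b *\<^sub>R (y - x))"
      using uv by (simp add: algebra_simps flip: scaleR_add_left)
    then show "f (x + (u *\<^sub>R a + v *\<^sub>R b) *\<^sub>R (y - x))
        \<le> u * f (x + a *\<^sub>R (y - x)) + v * f (x + b *\<^sub>R (y - x))"
      using cvx uv unfolding convex_on_def by simp
  qed simp
  moreover have "(\<phi> has_field_derivative inner g (y - x)) (at 0)"
  proof -
    have line: "((\<lambda>s. x + s *\<^sub>R (y - x)) has_derivative (\<lambda>s. s *\<^sub>R (y - x))) (at 0)"
      by (intro derivative_eq_intros) auto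
    have "(\<phi> has_derivative (\<lambda>s. inner g (s *\<^sub>R (y - x)))) (at 0)"
      using has_derivative_compose[OF line, of f "\<lambda>h. inner g h"] der unfolding \<phi>_def by simp
    then show ?thesis
      unfolding has_field_derivative_def by (simp add: mult.commute[of _ "inner g (y - x)"])
  qed
  ultimately have "inner g (y - x) \<le> \<phi> 1 - \<phi> 0"
    using convex_on_imp_above_tangent[of UNIV \<phi> 0 1] has_field_derivative_at_within by fastforce
  then show ?thesis
    unfolding \<phi>_def by simp
qed

lemma prox_objective_attains_min:
  fixes f :: "'a::euclidean_space \<Rightarrow> real"
  assumes cont: "continuous_on UNIV f"
    and minorant: "\<And>u. f z + inner g (u - z) \<le> f u"
    and t: "t > 0"
  shows "\<exists>x. \<forall>u. f x + norm (x - z)^2 / (2*t) \<le> f u + norm (u - z)^2 / (2*t)"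
proof -
  define h where "h u = f u + norm (u - z)^2 / (2*t)" for u
  \<comment> \<open>beyond radius \<open>R\<close> the quadratic term outgrows the affine minorant, so \<open>h u > h z\<close>\<close>
  define R where "R = 2 * t * norm g + 1"
  have "R > 0"
    using t unfolding R_def by (simp add: add_nonneg_pos)
  have "continuous_on (cball z R) h"
    unfolding h_def using t by (intro continuous_intros continuous_on_subset[OF cont]) auto
  moreover have "cball z R \<noteq> {}"
    using \<open>R > 0\<close> by simp
  ultimately obtain x where x: "\<forall>y\<in>cball z R. h x \<le> h y"
    using continuous_attains_inf[OF compact_cball] by blast
  have "h x \<le> h u" for u
  proof (cases "u \<in> cball z R")
    case False
    define r where "r = norm (u - z)"
    have "R < r"
      using False unfolding r_def by (simp add: dist_norm norm_minus_commute)
    have "0 < r"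
      using \<open>R < r\<close> \<open>R > 0\<close> by linarith
    moreover have "norm g < r / (2*t)"
      using \<open>R < r\<close> t unfolding R_def by (simp add: field_simps)
    ultimately have "norm g * r < r^2 / (2*t)"
      using mult_strict_right_mono[of "norm g" "r / (2*t)" r] by (simp add: power2_eq_square)
    moreover have "- (norm g * r) \<le> inner g (u - z)"
      unfolding r_def using Cauchy_Schwarz_ineq2[of g "u - z"] by linarith
    moreover have "h u = f u + r^2 / (2*t)" and "h z = f z"
      unfolding h_def r_def by simp_all
    ultimately have "h z < h u"
      using minorant[of u] by linarith
    moreover have "h x \<le> h z"
      using x \<open>R > 0\<close> by simp
    ultimately show ?thesis by simp
  qed (use x in blast)
  then show ?thesis
    unfolding h_def by blast
qed

lemma prox_objective_min_gradient:
  fixes f :: "'a::real_inner \<Rightarrow> real"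
  assumes der: "(f has_derivative (\<lambda>h. inner g h)) (at x)"
    and min: "\<And>u. f x + norm (x - z)^2 / (2*t) \<le> f u + norm (u - z)^2 / (2*t)"
    and t: "t \<noteq> 0"
  shows "g = (1/t) *\<^sub>R (z - x)"
proof -
  define w where "w = g + (1/t) *\<^sub>R (x - z)"
  have "((\<lambda>u. f u + inner (u - z) (u - z) / (2*t)) has_derivative
      (\<lambda>v. inner g v + (inner v (x - z) + inner (x - z) v) / (2*t))) (at x)"
    using der t by (intro derivative_eq_intros) auto
  moreover have "(\<lambda>v. inner g v + (inner v (x - z) + inner (x - z) v) / (2*t)) = (\<lambda>v. inner w v)"
    using t by (simp add: fun_eq_iff w_def inner_add_right inner_commute)
  ultimately have "((\<lambda>u. f u + inner (u - z) (u - z) / (2*t)) has_derivative (\<lambda>v. inner w v)) (at x)"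
    by simp
  then have "(\<lambda>v. inner w v) = (\<lambda>v. 0)"
    by (rule has_derivative_local_min) (use min in \<open>auto simp: power2_norm_eq_inner\<close>)
  then have "w = 0"
    by (metis inner_eq_zero_iff)
  then show ?thesis
    unfolding w_def by (simp add: algebra_simps eq_neg_iff_add_eq_0[symmetric])
qed

lemma prox_three_point:
  fixes f :: "'a::real_inner \<Rightarrow> real"
  assumes cvx: "convex_on UNIV f"
    and der: "(f has_derivative (\<lambda>h. inner g h)) (at y)"
    and stationary: "g = (1/t) *\<^sub>R (z - y)" and t: "t > 0"
  shows "f y + norm (y - z)^2 / (2*t) + norm (u - y)^2 / (2*t) \<le> f u + norm (u - z)^2 / (2*t)"
proof -
  have "f y + inner (z - y) (u - y) / t \<le> f u"
    using convex_on_gradient_inequality[OF cvx der, of u] stationary by simp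
  moreover have "norm (u - z)^2 + 2 * inner (z - y) (u - y) = norm (u - y)^2 + norm (y - z)^2"
    by (simp add: power2_norm_eq_inner inner_diff_left inner_diff_right inner_commute)
  then have "norm (u - y)^2 / (2*t) + norm (y - z)^2 / (2*t)
      = norm (u - z)^2 / (2*t) + inner (z - y) (u - y) / t"
    using t by (simp add: field_simps)
  ultimately show ?thesis
    by linarith
qed

lemma gradient_at_prox:
  fixes f :: "'a::euclidean_space \<Rightarrow> real"
  assumes cvx: "convex_on UNIV f"
    and der: "\<And>x. (f has_derivative (\<lambda>h. inner (g x) h)) (at x)"
    and t: "t > 0"
  shows "g (prox t f z) = (1/t) *\<^sub>R (z - prox t f z)"
proof -
  have "continuous_on UNIV f"
    by (metis der has_derivative_continuous continuous_at_imp_continuous_on)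
  then obtain x where min: "\<And>u. f x + norm (x - z)^2 / (2*t) \<le> f u + norm (u - z)^2 / (2*t)"
    using prox_objective_attains_min[OF _ convex_on_gradient_inequality[OF cvx der] t] by blast
  have stationary: "g x = (1/t) *\<^sub>R (z - x)"
    using prox_objective_min_gradient[OF der min] t by simp
  have "prox t f z = x"
    unfolding prox_def
  proof (rule the_equality)
    show "x \<in> prox_set t (\<lambda>x. ereal (f x)) z"
      using min by (simp add: prox_set_def)
  next
    fix y
    assume "y \<in> prox_set t (\<lambda>x. ereal (f x)) z"
    then have "f y + norm (y - z)^2 / (2*t) \<le> f x + norm (x - z)^2 / (2*t)"
      by (simp add: prox_set_def)
    then have "norm (y - x)^2 / (2*t) \<le> 0"
      using prox_three_point[OF cvx der stationary t, of y] by linarith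
    then show "y = x"
      using t by (simp add: divide_le_0_iff)
  qed
  then show ?thesis
    using stationary by simp
qed

lemma quadratic_models_complete_square:
  fixes x1 x2 \<mu>1 \<mu>2 c y :: "'a::real_inner"
  assumes center: "(\<beta>1 + \<beta>2) *\<^sub>R c = \<mu>1 + \<mu>2 + \<beta>1 *\<^sub>R x1 + \<beta>2 *\<^sub>R x2"
  shows "inner \<mu>1 (x1 - y) + \<beta>1/2 * norm (x1 - y)^2 + inner \<mu>2 (x2 - y) + \<beta>2/2 * norm (x2 - y)^2
    = (\<beta>1 + \<beta>2)/2 * norm (y - c)^2
      + (inner \<mu>1 x1 + \<beta>1/2 * norm x1^2 + inner \<mu>2 x2 + \<beta>2/2 * norm x2^2 - (\<beta>1 + \<beta>2)/2 * norm c^2)"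
proof -
  have "inner (\<mu>1 + \<mu>2 + \<beta>1 *\<^sub>R x1 + \<beta>2 *\<^sub>R x2) y = (\<beta>1 + \<beta>2) * inner c y"
    by (simp flip: center)
  then show ?thesis
    by (simp add: power2_norm_eq_inner inner_diff_left inner_diff_right inner_add_left inner_commute
        algebra_simps) (simp add: field_simps)
qed

lemma INF_attained_add_const:
  fixes h :: "'a \<Rightarrow> ereal" and p :: "'a \<Rightarrow> real"
  assumes min: "\<And>y. h a + ereal (p a) \<le> h y + ereal (p y)"
  shows "(INF y. h y + ereal (p y + C)) = h a + ereal (p a + C)"
proof (rule antisym)
  show "(INF y. h y + ereal (p y + C)) \<le> h a + ereal (p a + C)"
    by (rule INF_lower) simp
  show "h a + ereal (p a + C) \<le> (INF y. h y + ereal (p y + C))"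
    using add_right_mono[OF min, of "ereal C"] by (auto intro!: INF_greatest simp: add.assoc)
qed

lemma ryu_env_eq_INF_aug_lagr:
  assumes "g1 (prox \<gamma> f1 z1) = - \<mu>1"
    and "g2 (prox (\<gamma>/\<alpha>) f2 (z2 /\<^sub>R \<alpha> + prox \<gamma> f1 z1)) = - \<mu>2"
  shows "ryu_env \<gamma> \<alpha> f1 f2 f3 g1 g2 z1 z2
    = (INF y. aug_lagr (\<alpha>/\<gamma>) ((1-\<alpha>)/\<gamma>) f1 f2 f3
        (prox \<gamma> f1 z1) (prox (\<gamma>/\<alpha>) f2 (z2 /\<^sub>R \<alpha> + prox \<gamma> f1 z1)) y \<mu>1 \<mu>2)"
proof -
  have linearization_eq: "a + inner (y - p) (- \<mu>) + c / (2*\<gamma>) * norm (y - p)^2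
      = a + inner \<mu> (p - y) + c/\<gamma>/2 * norm (p - y)^2"
    for a c :: real and y p \<mu> :: 'a
    by (simp add: inner_diff_left inner_diff_right inner_commute norm_minus_commute)
  show ?thesis
    unfolding ryu_env_def aug_lagr_def Let_def assms linearization_eq ..
qed

lemma aug_lagr_complete_square:
  assumes "(\<beta>1 + \<beta>2) *\<^sub>R c = \<mu>1 + \<mu>2 + \<beta>1 *\<^sub>R x1 + \<beta>2 *\<^sub>R x2"
  obtains K where "\<And>y. aug_lagr \<beta>1 \<beta>2 f1 f2 f3 x1 x2 y \<mu>1 \<mu>2
    = f3 y + ereal ((\<beta>1 + \<beta>2)/2 * norm (y - c)^2 + K)"
proof -
  define K where "K = f1 x1 + f2 x2 + inner \<mu>1 x1 + \<beta>1/2 * norm x1^2 + inner \<mu>2 x2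
    + \<beta>2/2 * norm x2^2 - (\<beta>1 + \<beta>2)/2 * norm c^2"
  have "aug_lagr \<beta>1 \<beta>2 f1 f2 f3 x1 x2 y \<mu>1 \<mu>2 = f3 y + ereal ((\<beta>1 + \<beta>2)/2 * norm (y - c)^2 + K)"
    for y
  proof -
    have "aug_lagr \<beta>1 \<beta>2 f1 f2 f3 x1 x2 y \<mu>1 \<mu>2
        = f3 y + ereal ((f1 x1 + inner \<mu>1 (x1 - y) + (\<beta>1/2) * norm (x1 - y)^2)
                        + (f2 x2 + inner \<mu>2 (x2 - y) + (\<beta>2/2) * norm (x2 - y)^2))"
      unfolding aug_lagr_def by (simp add: add.assoc)
    also have "\<dots> = f3 y + ereal ((\<beta>1 + \<beta>2)/2 * norm (y - c)^2 + K)"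
      using quadratic_models_complete_square[OF assms, of y] unfolding K_def
      by (intro arg_cong[where f = "\<lambda>r. f3 y + ereal r"]) linarith
    finally show ?thesis .
  qed
  then show ?thesis
    by (rule that)
qed

theorem lemma6:
  fixes f1 f2 :: "'a::euclidean_space \<Rightarrow> real"
    and g1 g2 :: "'a \<Rightarrow> 'a"
    and f3 :: "'a \<Rightarrow> ereal"
    and L1 L2 \<gamma> lam \<alpha> :: real
    and x1 x2 x3 z1 z2 :: "nat \<Rightarrow> 'a"
  assumes cvx1: "convex_on UNIV f1" and cvx2: "convex_on UNIV f2"
    and grad1: "\<And>x. (f1 has_derivative (\<lambda>h. inner (g1 x) h)) (at x)"
    and grad2: "\<And>x. (f2 has_derivative (\<lambda>h. inner (g2 x) h)) (at x)"
    and L1_pos: "L1 > 0" and L2_pos: "L2 > 0"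
    and lip1: "lipschitz_on L1 UNIV g1" and lip2: "lipschitz_on L2 UNIV g2"
    and prop3: "proper_fun f3" and lsc3: "lsc_fun f3"
    and minimizer: "\<exists>xs. \<forall>y. ereal (f1 xs + f2 xs) + f3 xs \<le> ereal (f1 y + f2 y) + f3 y"
    and gamma_pos: "\<gamma> > 0" and gamma_bound: "\<gamma> < 1 / (L1 + L2)"
    and lambda_pos: "lam > 0" and alpha_pos: "\<alpha> > 0"
    and it_x1: "\<And>k. x1 k = prox \<gamma> f1 (z1 k)"
    and it_x2: "\<And>k. x2 k = prox (\<gamma>/\<alpha>) f2 (z2 k /\<^sub>R \<alpha> + x1 k)"
    and it_x3: "\<And>k. x3 k \<in> prox_set \<gamma> f3 (x1 k - z1 k + x2 k - z2 k)"
    and it_z1: "\<And>k. z1 (Suc k) = z1 k + lam *\<^sub>R (x3 k - x1 k)"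
    and it_z2: "\<And>k. z2 (Suc k) = z2 k + lam *\<^sub>R (x3 k - x2 k)"
  shows "\<forall>k\<ge>1. ryu_env \<gamma> \<alpha> f1 f2 f3 g1 g2 (z1 k) (z2 k)
            = aug_lagr (\<alpha>/\<gamma>) ((1-\<alpha>)/\<gamma>) f1 f2 f3 (x1 k) (x2 k) (x3 k)
                ((1/\<gamma>) *\<^sub>R (x1 k - z1 k)) ((1/\<gamma>) *\<^sub>R (\<alpha> *\<^sub>R (x2 k - x1 k) - z2 k))"
proof (intro allI impI)
  fix k :: nat
  define \<mu>1 where "\<mu>1 = (1/\<gamma>) *\<^sub>R (x1 k - z1 k)"
  define \<mu>2 where "\<mu>2 = (1/\<gamma>) *\<^sub>R (\<alpha> *\<^sub>R (x2 k - x1 k) - z2 k)"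
  define w where "w = x1 k - z1 k + x2 k - z2 k"
  have "g1 (x1 k) = - \<mu>1"
    using gradient_at_prox[OF cvx1 grad1 gamma_pos, of "z1 k"]
    unfolding it_x1[symmetric] \<mu>1_def by (simp add: scaleR_diff_right)
  moreover have "g2 (x2 k) = - \<mu>2"
    using gradient_at_prox[OF cvx2 grad2, of "\<gamma>/\<alpha>" "z2 k /\<^sub>R \<alpha> + x1 k"] gamma_pos alpha_pos
    unfolding it_x2[symmetric] \<mu>2_def by (simp add: scaleR_add_right scaleR_diff_right)
  ultimately have env: "ryu_env \<gamma> \<alpha> f1 f2 f3 g1 g2 (z1 k) (z2 k)
      = (INF y. aug_lagr (\<alpha>/\<gamma>) ((1-\<alpha>)/\<gamma>) f1 f2 f3 (x1 k) (x2 k) y \<mu>1 \<mu>2)"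
    unfolding it_x2 it_x1 by (rule ryu_env_eq_INF_aug_lagr)
  have center: "(\<alpha>/\<gamma> + (1-\<alpha>)/\<gamma>) *\<^sub>R w = \<mu>1 + \<mu>2 + (\<alpha>/\<gamma>) *\<^sub>R x1 k + ((1-\<alpha>)/\<gamma>) *\<^sub>R x2 k"
    unfolding w_def \<mu>1_def \<mu>2_def by (simp add: algebra_simps diff_divide_distrib)
  obtain K where "\<And>y. aug_lagr (\<alpha>/\<gamma>) ((1-\<alpha>)/\<gamma>) f1 f2 f3 (x1 k) (x2 k) y \<mu>1 \<mu>2
      = f3 y + ereal ((\<alpha>/\<gamma> + (1-\<alpha>)/\<gamma>)/2 * norm (y - w)^2 + K)"
    using aug_lagr_complete_square[OF center, of f1 f2 f3] by blast
  moreover have "(\<alpha>/\<gamma> + (1-\<alpha>)/\<gamma>)/2 * r = r / (2*\<gamma>)" for r :: real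
    by (simp add: add_divide_distrib[symmetric])
  ultimately have lagr: "\<And>y. aug_lagr (\<alpha>/\<gamma>) ((1-\<alpha>)/\<gamma>) f1 f2 f3 (x1 k) (x2 k) y \<mu>1 \<mu>2
      = f3 y + ereal (norm (y - w)^2 / (2*\<gamma>) + K)"
    by (simp add: mult.commute)
  have x3_min: "\<And>y. f3 (x3 k) + ereal (norm (x3 k - w)^2 / (2*\<gamma>)) \<le> f3 y + ereal (norm (y - w)^2 / (2*\<gamma>))"
    using it_x3[of k] unfolding prox_set_def w_def by blast
  from INF_attained_add_const[where p = "\<lambda>y. norm (y - w)^2 / (2*\<gamma>)", OF x3_min]
  show "ryu_env \<gamma> \<alpha> f1 f2 f3 g1 g2 (z1 k) (z2 k)
      = aug_lagr (\<alpha>/\<gamma>) ((1-\<alpha>)/\<gamma>) f1 f2 f3 (x1 k) (x2 k) (x3 k)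
          ((1/\<gamma>) *\<^sub>R (x1 k - z1 k)) ((1/\<gamma>) *\<^sub>R (\<alpha> *\<^sub>R (x2 k - x1 k) - z2 k))"
    unfolding env lagr \<mu>1_def[symmetric] \<mu>2_def[symmetric] .
qed

end
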